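(* Let $(\mathfrak{g},[\cdot,\cdot],\langle\cdot,\cdot\rangle)$ be a quadratic Lie algebra. If $\mathfrak{g}$ admits a symplectic form, i.e. a nondegenerate 2-cocycle $\theta\in\wedge^2\mathfrak{g}^*$, then $\mathfrak{g}$ is nilpotent.
   Context: A quadratic Lie algebra is a finite-dimensional real Lie algebra $\mathfrak{g}$ endowed with a nondegenerate symmetric bilinear form $\langle\cdot,\cdot\rangle$ which is invariant: $\langle [u,v],w\rangle+\langle [u,w],v\rangle=0$ for all $u,v,w\in\mathfrak{g}$. A 2-form $\theta\in\wedge^2\mathfrak{g}^*$ is a 2-cocycle if $\theta([u,v],w)+\theta([v,w],u)+\theta([w,u],v)=0$ for all $u,v,w\in\mathfrak{g}$. *)

theory Defs
  imports "HOL-Analysis.Analysis"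
begin

definition lie_algebra :: "('a::euclidean_space \<Rightarrow> 'a \<Rightarrow> 'a) \<Rightarrow> bool" where
  "lie_algebra br \<longleftrightarrow> bilinear br \<and> (\<forall>x. br x x = 0) \<and>
     (\<forall>x y z. br x (br y z) + br y (br z x) + br z (br x y) = 0)"

definition nondegenerate_form :: "('a::real_vector \<Rightarrow> 'a \<Rightarrow> real) \<Rightarrow> bool" where
  "nondegenerate_form B \<longleftrightarrow> (\<forall>u. (\<forall>v. B u v = 0) \<longrightarrow> u = 0)"

definition quadratic_lie_algebra ::
    "('a::euclidean_space \<Rightarrow> 'a \<Rightarrow> 'a) \<Rightarrow> ('a \<Rightarrow> 'a \<Rightarrow> real) \<Rightarrow> bool" where
  "quadratic_lie_algebra br B \<longleftrightarrow> lie_algebra br \<and> bilinear B \<and>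
     (\<forall>u v. B u v = B v u) \<and> nondegenerate_form B \<and>
     (\<forall>u v w. B (br u v) w + B (br u w) v = 0)"

definition two_cocycle ::
    "('a::euclidean_space \<Rightarrow> 'a \<Rightarrow> 'a) \<Rightarrow> ('a \<Rightarrow> 'a \<Rightarrow> real) \<Rightarrow> bool" where
  "two_cocycle br \<theta> \<longleftrightarrow> bilinear \<theta> \<and> (\<forall>u. \<theta> u u = 0) \<and>
     (\<forall>u v w. \<theta> (br u v) w + \<theta> (br v w) u + \<theta> (br w u) v = 0)"

definition symplectic_form ::
    "('a::euclidean_space \<Rightarrow> 'a \<Rightarrow> 'a) \<Rightarrow> ('a \<Rightarrow> 'a \<Rightarrow> real) \<Rightarrow> bool" where
  "symplectic_form br \<theta> \<longleftrightarrow> two_cocycle br \<theta> \<and> nondegenerate_form \<theta>"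

fun lower_central :: "('a::euclidean_space \<Rightarrow> 'a \<Rightarrow> 'a) \<Rightarrow> nat \<Rightarrow> 'a set" where
  "lower_central br 0 = UNIV"
| "lower_central br (Suc k) = span {br x y | x y. y \<in> lower_central br k}"

definition nilpotent_lie :: "('a::euclidean_space \<Rightarrow> 'a \<Rightarrow> 'a) \<Rightarrow> bool" where
  "nilpotent_lie br \<longleftrightarrow> (\<exists>k. lower_central br k = {0})"

end

theory Submission
  imports Defs "HOL-Computational_Algebra.Fundamental_Theorem_Algebra"
begin

text \<open>Since \<open>B\<close> is nondegenerate, the symplectic form can be written \<open>\<theta>(u, v) = B(D u, v)\<close> for an
  invertible linear map \<open>D\<close>, and invariance of \<open>B\<close> turns the cocycle identity for \<open>\<theta>\<close> into the
  statement that \<open>D\<close> is a derivation. By Jacobson's theorem a Lie algebra with an invertible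
  derivation is nilpotent. For its proof, pass to the complexification: the generalized
  eigenspaces \<open>V c\<close> of \<open>D\<close> span, only finitely many are nonzero, \<open>V 0 = 0\<close> and
  \<open>[V a, V b] \<subseteq> V (a + b)\<close>. So for homogeneous \<open>y\<close> the map \<open>ad y\<close> shifts degrees by a nonzero
  amount and is nilpotent on homogeneous elements, and an Engel-type argument over this grading
  shows that a graded upper central series exhausts the algebra.\<close>

lemma bilinear_alternating_antisym:
  assumes f: "bilinear f" and alt: "\<And>x. f x x = 0"
  shows "f x y = - f y x"
proof -
  have "f x x + f x y + f y x + f y y = 0"
    using alt[of "x + y"] by (simp add: bilinear_ladd[OF f] bilinear_radd[OF f] algebra_simps)
  then show ?thesis by (simp add: alt eq_neg_iff_add_eq_0)
qed

lemma bilinear_span_in_subspace: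
  assumes f: "bilinear f" and C: "subspace C"
    and AB: "\<And>x y. x \<in> A \<Longrightarrow> y \<in> B \<Longrightarrow> f x y \<in> C"
    and x: "x \<in> span A" and y: "y \<in> span B"
  shows "f x y \<in> C"
proof -
  have right: "subspace {y. f a y \<in> C}" for a
    using C unfolding subspace_def
    by (simp add: bilinear_rzero[OF f] bilinear_radd[OF f] bilinear_rmul[OF f])
  have left: "subspace {x. \<forall>y\<in>span B. f x y \<in> C}"
    using C unfolding subspace_def
    by (simp add: bilinear_lzero[OF f] bilinear_ladd[OF f] bilinear_lmul[OF f])
  have "A \<subseteq> {x. \<forall>y\<in>span B. f x y \<in> C}"
  proof
    fix a assume "a \<in> A"
    then have "span B \<subseteq> {y. f a y \<in> C}"
      using AB by (intro span_minimal[OF _ right]) auto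
    then show "a \<in> {x. \<forall>y\<in>span B. f x y \<in> C}" by auto
  qed
  then have "span A \<subseteq> {x. \<forall>y\<in>span B. f x y \<in> C}"
    by (rule span_minimal[OF _ left])
  then show ?thesis using x y by auto
qed

lemma linear_funpow:
  fixes f :: "'a::real_vector \<Rightarrow> 'a"
  assumes "linear f"
  shows "linear (f ^^ n)"
proof (induction n)
  case 0
  show ?case by (simp add: id_def[symmetric] linear_id)
next
  case (Suc n)
  have "f ^^ Suc n = f \<circ> (f ^^ n)" by simp
  then show ?case using linear_compose[OF Suc.IH assms] by metis
qed

lemma linear_funpow_eq_0_mono:
  fixes f :: "'a::real_vector \<Rightarrow> 'a"
  assumes "linear f" "(f ^^ n) u = 0" "n \<le> m"
  shows "(f ^^ m) u = 0"
proof -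
  have "(f ^^ m) u = (f ^^ (m - n)) ((f ^^ n) u)"
    using assms(3) by (metis funpow_add le_add_diff_inverse2 o_apply)
  then show ?thesis using assms(2) linear_0[OF linear_funpow[OF assms(1)]] by simp
qed

lemma leibniz_funpow_in_span:
  assumes C: "linear C" and leibniz: "\<And>u v. C (f u v) = f (A u) v + f u (B v)"
  shows "(C ^^ n) (f u v) \<in> span {f ((A ^^ i) u) ((B ^^ j) v) |i j. i + j = n}"
proof (induction n)
  case (Suc n)
  let ?S = "\<lambda>n. {f ((A ^^ i) u) ((B ^^ j) v) |i j. i + j = n}"
  have mem: "f ((A ^^ i) u) ((B ^^ j) v) \<in> ?S (Suc n)" if "i + j = Suc n" for i j
    using that by blast
  have "C (f ((A ^^ i) u) ((B ^^ j) v)) \<in> span (?S (Suc n))" if ij: "i + j = n" for i j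
  proof -
    have "C (f ((A ^^ i) u) ((B ^^ j) v))
        = f ((A ^^ Suc i) u) ((B ^^ j) v) + f ((A ^^ i) u) ((B ^^ Suc j) v)"
      by (simp add: leibniz)
    moreover have "f ((A ^^ Suc i) u) ((B ^^ j) v) \<in> ?S (Suc n)"
      using ij by (intro mem) simp
    moreover have "f ((A ^^ i) u) ((B ^^ Suc j) v) \<in> ?S (Suc n)"
      using ij by (intro mem) simp
    ultimately show ?thesis by (simp add: span_add span_base)
  qed
  then have "C ` ?S n \<subseteq> span (?S (Suc n))" by blast
  then have "span (C ` ?S n) \<subseteq> span (?S (Suc n))"
    by (rule span_minimal[OF _ subspace_span])
  then have "C ` span (?S n) \<subseteq> span (?S (Suc n))"
    by (simp only: span_linear_image[OF C])
  then show ?case using Suc.IH by auto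
qed (auto intro: span_base)

lemma leibniz_funpow_eq_0:
  fixes f :: "'a::real_vector \<Rightarrow> 'b::real_vector \<Rightarrow> 'c::real_vector"
  assumes f: "bilinear f" and C: "linear C" and A: "linear A" and B: "linear B"
    and leibniz: "\<And>u v. C (f u v) = f (A u) v + f u (B v)"
    and u: "(A ^^ p) u = 0" and v: "(B ^^ q) v = 0"
  shows "(C ^^ (p + q)) (f u v) = 0"
proof -
  have "{f ((A ^^ i) u) ((B ^^ j) v) |i j. i + j = p + q} \<subseteq> {0}"
  proof safe
    fix i j :: nat assume "i + j = p + q"
    then have "p \<le> i \<or> q \<le> j" by linarith
    then show "f ((A ^^ i) u) ((B ^^ j) v) = 0"
      using linear_funpow_eq_0_mono[OF A u] linear_funpow_eq_0_mono[OF B v]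
      by (auto simp: bilinear_lzero[OF f] bilinear_rzero[OF f])
  qed
  then show ?thesis
    using leibniz_funpow_in_span[where C = C and f = f and A = A and B = B, OF C leibniz,
        of "p + q" u v] span_minimal[of _ "{0}"]
    by (auto simp: span_zero)
qed

definition gen_kernel :: "('a::real_vector \<Rightarrow> 'a) \<Rightarrow> 'a set" where
  "gen_kernel f = {u. \<exists>n. (f ^^ n) u = 0}"

lemma subspace_gen_kernel:
  assumes f: "linear f"
  shows "subspace (gen_kernel f)"
  unfolding subspace_def gen_kernel_def
proof (intro conjI ballI allI)
  show "0 \<in> {u. \<exists>n. (f ^^ n) u = 0}" by (auto intro: exI[of _ 0])
next
  fix x y assume "x \<in> {u. \<exists>n. (f ^^ n) u = 0}" "y \<in> {u. \<exists>n. (f ^^ n) u = 0}"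
  then obtain n m where n: "(f ^^ n) x = 0" and m: "(f ^^ m) y = 0" by auto
  have "(f ^^ (n + m)) (x + y) = (f ^^ (n + m)) x + (f ^^ (n + m)) y"
    by (rule linear_add[OF linear_funpow[OF f]])
  also have "\<dots> = 0"
    using linear_funpow_eq_0_mono[OF f n, of "n + m"] linear_funpow_eq_0_mono[OF f m, of "n + m"]
    by simp
  finally show "x + y \<in> {u. \<exists>n. (f ^^ n) u = 0}" by auto
next
  fix r :: real and x assume "x \<in> {u. \<exists>n. (f ^^ n) u = 0}"
  then obtain n where "(f ^^ n) x = 0" by auto
  then show "r *\<^sub>R x \<in> {u. \<exists>n. (f ^^ n) u = 0}"
    by (auto simp: linear_scale[OF linear_funpow[OF f]])
qed

lemma gen_kernel_nontrivial_imp_kernel_nontrivial: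
  fixes f :: "'a::zero \<Rightarrow> 'a"
  assumes "(f ^^ n) x = 0" "x \<noteq> 0"
  shows "\<exists>y. y \<noteq> 0 \<and> f y = 0"
  using assms
proof (induction n arbitrary: x)
  case (Suc n)
  show ?case
  proof (cases "f x = 0")
    case False
    moreover have "(f ^^ n) (f x) = 0"
      using Suc.prems(1) by (simp add: funpow_Suc_right del: funpow.simps)
    ultimately show ?thesis using Suc.IH by blast
  qed (use Suc.prems in blast)
qed simp

lemma lie_algebra_antisym: "lie_algebra br \<Longrightarrow> br x y = - br y x"
  unfolding lie_algebra_def by (blast intro: bilinear_alternating_antisym)

lemma lie_algebra_leibniz:
  assumes lie: "lie_algebra br"
  shows "br a (br b c) = br (br a b) c + br b (br a c)"
proof -
  have bil: "bilinear br" and jacobi: "br a (br b c) + br b (br c a) + br c (br a b) = 0"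
    using lie unfolding lie_algebra_def by auto
  have "br b (br c a) = - br b (br a c)"
    by (metis lie_algebra_antisym[OF lie] bilinear_rneg[OF bil])
  moreover have "br c (br a b) = - br (br a b) c" by (rule lie_algebra_antisym[OF lie])
  ultimately have "br a (br b c) - br b (br a c) - br (br a b) c = 0"
    using jacobi by (simp add: algebra_simps)
  then show ?thesis by (simp add: algebra_simps)
qed

lemma lie_algebraI_leibniz:
  assumes bil: "bilinear br" and alt: "\<And>x. br x x = 0"
    and leibniz: "\<And>a b c. br a (br b c) = br (br a b) c + br b (br a c)"
  shows "lie_algebra br"
  unfolding lie_algebra_def
proof (intro conjI allI bil alt)
  fix a b c
  have "br b (br a c) + br b (br c a) = 0"
    by (simp add: bilinear_alternating_antisym[OF bil alt, of c a] bilinear_rneg[OF bil])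
  moreover have "br (br a b) c + br c (br a b) = 0"
    by (simp add: bilinear_alternating_antisym[OF bil alt, of c])
  ultimately show "br a (br b c) + br b (br c a) + br c (br a b) = 0"
    unfolding leibniz[of a] by (simp add: algebra_simps)
qed

lemma lower_central_subset_0_imp_nilpotent:
  assumes "lower_central br k \<subseteq> {0}"
  shows "nilpotent_lie br"
proof -
  have "0 \<in> lower_central br k" by (cases k) (simp_all add: span_zero)
  then show ?thesis using assms unfolding nilpotent_lie_def by blast
qed

section \<open>A graded Engel theorem\<close>

locale graded_lie_algebra =
  fixes br :: "'v::euclidean_space \<Rightarrow> 'v \<Rightarrow> 'v" and V :: "complex \<Rightarrow> 'v set"
  assumes lie: "lie_algebra br"
    and subspace_V: "subspace (V c)"
    and bracket_V: "x \<in> V a \<Longrightarrow> y \<in> V b \<Longrightarrow> br x y \<in> V (a + b)"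
    and V_0: "V 0 = {0}"
    and finite_support: "finite {c. V c \<noteq> {0}}"
    and span_V: "span (\<Union>c. V c) = UNIV"
begin

lemma bil: "bilinear br"
  using lie unfolding lie_algebra_def by blast

lemma alt: "br x x = 0"
  using lie unfolding lie_algebra_def by blast

definition homogeneous :: "'v set" where
  "homogeneous = (\<Union>c. V c)"

definition graded_subspace :: "'v set \<Rightarrow> bool" where
  "graded_subspace X \<longleftrightarrow> subspace X \<and> X \<subseteq> span (X \<inter> homogeneous)"

definition ad_invariant :: "'v set \<Rightarrow> 'v set \<Rightarrow> bool" where
  "ad_invariant K X \<longleftrightarrow> (\<forall>k\<in>K. \<forall>x\<in>X. br k x \<in> X)"

text \<open>Iterating \<open>ad y\<close> on a homogeneous element walks through the degrees \<open>b + j c\<close>,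
  which for \<open>c \<noteq> 0\<close> eventually leave the finite support.\<close>
lemma ad_power_homogeneous_eq_0:
  assumes y: "y \<in> V c" "y \<noteq> 0" and m: "m \<in> V b"
  shows "\<exists>j. (br y ^^ j) m = 0"
proof -
  have "c \<noteq> 0" using y V_0 by auto
  have degree: "(br y ^^ j) m \<in> V (b + of_nat j * c)" for j
  proof (induction j)
    case (Suc j)
    have "br y ((br y ^^ j) m) \<in> V (c + (b + of_nat j * c))" by (rule bracket_V[OF y(1) Suc])
    then show ?case by (simp add: algebra_simps)
  qed (use m in simp)
  have "inj (\<lambda>j::nat. b + of_nat j * c)"
    using \<open>c \<noteq> 0\<close> by (auto simp: inj_def)
  then have "infinite (range (\<lambda>j::nat. b + of_nat j * c))"
    using finite_imageD by blast
  then have "\<not> range (\<lambda>j::nat. b + of_nat j * c) \<subseteq> {c. V c \<noteq> {0}}"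
    using finite_support finite_subset by blast
  then obtain j where "V (b + of_nat j * c) = {0}" by blast
  then show ?thesis using degree by blast
qed

lemma ad_power_last_outside:
  assumes y: "y \<in> homogeneous" "y \<noteq> 0" and m: "m \<in> homogeneous" "m \<notin> U"
    and U: "subspace U"
  shows "\<exists>i. (br y ^^ i) m \<notin> U \<and> br y ((br y ^^ i) m) \<in> U"
proof -
  obtain c b where "y \<in> V c" "m \<in> V b" using y m unfolding homogeneous_def by blast
  then obtain j where "(br y ^^ j) m = 0" using ad_power_homogeneous_eq_0 y(2) by blast
  then have "(br y ^^ j) m \<in> U" using subspace_0[OF U] by simp
  moreover have "(br y ^^ 0) m \<notin> U" using m(2) by simp
  ultimately obtain i where "(br y ^^ i) m \<notin> U" "(br y ^^ Suc i) m \<in> U"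
    using ex_least_nat_less[of "\<lambda>j. (br y ^^ j) m \<in> U"] by blast
  then show ?thesis by auto
qed

lemma graded_subspace_homogeneous_outside:
  assumes "graded_subspace M" "\<not> M \<subseteq> U" "subspace U"
  shows "\<exists>m \<in> M \<inter> homogeneous. m \<notin> U"
proof (rule ccontr)
  assume "\<not> ?thesis"
  then have "M \<inter> homogeneous \<subseteq> U" by auto
  then have "span (M \<inter> homogeneous) \<subseteq> U" using assms(3) by (rule span_minimal)
  then show False using assms(1,2) unfolding graded_subspace_def by auto
qed

lemma graded_subspace_span_insert:
  assumes K: "graded_subspace K" and y: "y \<in> homogeneous"
  shows "graded_subspace (span (insert y K))"
  unfolding graded_subspace_def
proof
  have "insert y K \<subseteq> span (span (insert y K) \<inter> homogeneous)"
  proof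
    fix x assume "x \<in> insert y K"
    then show "x \<in> span (span (insert y K) \<inter> homogeneous)"
    proof
      assume "x \<in> K"
      then have "x \<in> span (K \<inter> homogeneous)" using K unfolding graded_subspace_def by auto
      moreover have "K \<inter> homogeneous \<subseteq> span (insert y K) \<inter> homogeneous" by (auto simp: span_base)
      ultimately show ?thesis using span_mono by blast
    qed (use y in \<open>simp add: span_base\<close>)
  qed
  then show "span (insert y K) \<subseteq> span (span (insert y K) \<inter> homogeneous)"
    by (simp add: span_minimal)
qed simp

lemma ad_invariant_span_insert:
  assumes K: "subspace K" "ad_invariant K K" and y: "\<forall>k\<in>K. br k y \<in> K"
  shows "ad_invariant (span (insert y K)) (span (insert y K))"
  unfolding ad_invariant_def
proof (intro ballI)
  fix k k' assume kk': "k \<in> span (insert y K)" "k' \<in> span (insert y K)"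
  have "br a b \<in> K" if "a \<in> insert y K" "b \<in> insert y K" for a b
  proof -
    have "br y b \<in> K" if "b \<in> K"
      using y that lie_algebra_antisym[OF lie, of y b] subspace_neg[OF K(1)] by metis
    then show ?thesis
      using that K(2) y subspace_0[OF K(1)] alt unfolding ad_invariant_def by auto
  qed
  then have "br k k' \<in> K" by (rule bilinear_span_in_subspace[OF bil K(1) _ kk'])
  then show "br k k' \<in> span (insert y K)" by (meson span_base span_mono subset_insertI subsetD)
qed

lemma maximal_graded_subalgebra_exists:
  assumes K: "graded_subspace K" "\<not> K \<subseteq> {0}"
  obtains K' where "graded_subspace K'" "ad_invariant K' K'" "K' \<subseteq> K" "K' \<noteq> K"
    and "\<And>K''. graded_subspace K'' \<Longrightarrow> ad_invariant K'' K'' \<Longrightarrow> K'' \<subseteq> K \<Longrightarrow> K'' \<noteq> K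
           \<Longrightarrow> dim K'' \<le> dim K'"
proof -
  define P where "P K' \<longleftrightarrow> graded_subspace K' \<and> ad_invariant K' K' \<and> K' \<subseteq> K \<and> K' \<noteq> K" for K'
  have "P {0}"
    using K subspace_0[of K] unfolding P_def graded_subspace_def ad_invariant_def
    by (auto simp: span_zero alt)
  moreover have "\<forall>K'. P K' \<longrightarrow> dim K' < DIM('v) + 1"
    using dim_subset_UNIV by (metis less_add_one order_le_less_trans)
  ultimately obtain K' where "P K'" "\<And>K''. P K'' \<Longrightarrow> dim K'' \<le> dim K'"
    using ex_has_greatest_nat[of P "{0}" dim "DIM('v) + 1"] by blast
  then show ?thesis using that unfolding P_def by blast
qed

lemma maximal_graded_subalgebra_span_insert:
  assumes K: "subspace K" and K': "graded_subspace K'" "ad_invariant K' K'" "K' \<subseteq> K"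
    and max: "\<And>K''. graded_subspace K'' \<Longrightarrow> ad_invariant K'' K'' \<Longrightarrow> K'' \<subseteq> K \<Longrightarrow> K'' \<noteq> K
               \<Longrightarrow> dim K'' \<le> dim K'"
    and y: "y \<in> K" "y \<in> homogeneous" "y \<notin> K'" "\<forall>k\<in>K'. br k y \<in> K'"
  shows "K = span (insert y K')"
proof (rule ccontr)
  have sK': "subspace K'" using K'(1) unfolding graded_subspace_def by auto
  assume "K \<noteq> span (insert y K')"
  moreover have "span (insert y K') \<subseteq> K" using y(1) K'(3) by (intro span_minimal[OF _ K]) auto
  ultimately have "dim (span (insert y K')) \<le> dim K'"
    by (intro max graded_subspace_span_insert[OF K'(1) y(2)]
        ad_invariant_span_insert[OF sK' K'(2) y(4)]) auto
  moreover have "span K' \<subset> span (insert y K')"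
    using y(3) sK' by (metis insertI1 psubsetI span_base span_eq_iff span_mono subset_insertI)
  ultimately show False using dim_psubset[of K' "insert y K'"] by (simp add: dim_span)
qed

lemma ad_power_invariants:
  assumes y: "y \<in> K" "y \<in> homogeneous" "\<forall>k\<in>K'. br k y \<in> K'" and "K' \<subseteq> K"
    and m: "m \<in> M" "m \<in> homogeneous" "\<forall>k\<in>K'. br k m \<in> U"
    and U: "subspace U" and KM: "ad_invariant K M" and KU: "ad_invariant K U"
  shows "(br y ^^ j) m \<in> M \<and> (br y ^^ j) m \<in> homogeneous \<and> (\<forall>k\<in>K'. br k ((br y ^^ j) m) \<in> U)"
proof (induction j)
  case (Suc j)
  let ?m = "(br y ^^ j) m"
  have "br y ?m \<in> M" using Suc y(1) KM unfolding ad_invariant_def by auto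
  moreover have "br y ?m \<in> homogeneous"
    using Suc y(2) bracket_V unfolding homogeneous_def by blast
  moreover have "br k (br y ?m) \<in> U" if k: "k \<in> K'" for k
  proof -
    have "br (br k y) ?m \<in> U" using k y(3) Suc by blast
    moreover have "br k ?m \<in> U" using k Suc by blast
    then have "br y (br k ?m) \<in> U" using KU y(1) unfolding ad_invariant_def by blast
    ultimately show ?thesis
      unfolding lie_algebra_leibniz[OF lie, of k y] by (rule subspace_add[OF U])
  qed
  ultimately show ?case by simp
qed (use m in simp)

text \<open>The hypothesis for a maximal proper graded subalgebra \<open>K'\<close> acting on
  \<open>K / K'\<close> yields a homogeneous \<open>y\<close> normalising \<open>K'\<close>, so \<open>K = K' + \<real> y\<close>; acting on \<open>M / U\<close> it
  yields a homogeneous \<open>m\<close> killed by \<open>K'\<close> modulo \<open>U\<close>, and the last iterate \<open>(ad y)\<^sup>i m\<close> outside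
  \<open>U\<close> is the required element.\<close>
theorem graded_engel:
  assumes "graded_subspace K" "ad_invariant K K"
    and "graded_subspace M" "graded_subspace U" "U \<subseteq> M" "\<not> M \<subseteq> U"
    and "ad_invariant K M" "ad_invariant K U"
  shows "\<exists>m \<in> M \<inter> homogeneous. m \<notin> U \<and> (\<forall>k\<in>K. br k m \<in> U)"
  using assms
proof (induction "dim K" arbitrary: K M U rule: less_induct)
  case less
  have sU: "subspace U" and sK: "subspace K"
    using less.prems unfolding graded_subspace_def by auto
  show ?case
  proof (cases "K \<subseteq> {0}")
    case True
    obtain m where "m \<in> M \<inter> homogeneous" "m \<notin> U"
      using graded_subspace_homogeneous_outside[OF less.prems(3,6) sU] by blast
    moreover have "\<forall>k\<in>K. br k m \<in> U"
      using True subspace_0[OF sU] by (auto simp: bilinear_lzero[OF bil])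
    ultimately show ?thesis by blast
  next
    case False
    obtain K' where K': "graded_subspace K'" "ad_invariant K' K'" "K' \<subseteq> K" "K' \<noteq> K"
      and max: "\<And>K''. graded_subspace K'' \<Longrightarrow> ad_invariant K'' K'' \<Longrightarrow> K'' \<subseteq> K \<Longrightarrow> K'' \<noteq> K
                  \<Longrightarrow> dim K'' \<le> dim K'"
      using maximal_graded_subalgebra_exists[OF less.prems(1) False] by blast
    have sK': "subspace K'" using K'(1) unfolding graded_subspace_def by auto
    have dim_less: "dim K' < dim K"
      using K'(3,4) sK sK' by (metis dim_psubset psubsetI span_eq_iff)
    have "ad_invariant K' K" using K'(3) less.prems(2) unfolding ad_invariant_def by blast
    then obtain y where y: "y \<in> K" "y \<in> homogeneous" "y \<notin> K'" "\<forall>k\<in>K'. br k y \<in> K'"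
      using less.hyps[OF dim_less K'(1,2) less.prems(1) K'(1,3)] K'(2,3,4) by blast
    have K_eq: "K = span (insert y K')"
      by (rule maximal_graded_subalgebra_span_insert[OF sK K'(1-3) max y])
    have "ad_invariant K' M" "ad_invariant K' U"
      using K'(3) less.prems(7,8) unfolding ad_invariant_def by blast+
    then obtain m where m: "m \<in> M" "m \<in> homogeneous" "m \<notin> U" "\<forall>k\<in>K'. br k m \<in> U"
      using less.hyps[OF dim_less K'(1,2) less.prems(3-6)] by blast
    have "y \<noteq> 0" using y(3) subspace_0[OF sK'] by auto
    then obtain i where i: "(br y ^^ i) m \<notin> U" "br y ((br y ^^ i) m) \<in> U"
      using ad_power_last_outside[OF y(2) _ m(2,3) sU] by blast
    note invariants = ad_power_invariants[OF y(1,2,4) K'(3) m(1,2,4) sU less.prems(7,8), of i]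
    have "br k ((br y ^^ i) m) \<in> U" if "k \<in> K" for k
    proof -
      have gen: "br a b \<in> U" if "a \<in> insert y K'" "b \<in> {(br y ^^ i) m}" for a b
        using that i(2) invariants by blast
      have k: "k \<in> span (insert y K')" using that K_eq by simp
      have "(br y ^^ i) m \<in> span {(br y ^^ i) m}" by (simp add: span_base)
      from bilinear_span_in_subspace[OF bil sU gen k this] show ?thesis .
    qed
    then show ?thesis using invariants i(1) by blast
  qed
qed

primrec graded_upper_central :: "nat \<Rightarrow> 'v set" where
  "graded_upper_central 0 = {0}"
| "graded_upper_central (Suc k) =
     span {m \<in> homogeneous. \<forall>w. br w m \<in> graded_upper_central k}"

lemma subspace_graded_upper_central: "subspace (graded_upper_central k)"
  by (cases k) auto

lemma graded_subspace_graded_upper_central: "graded_subspace (graded_upper_central k)"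
proof (cases k)
  case (Suc k')
  have "{m \<in> homogeneous. \<forall>w. br w m \<in> graded_upper_central k'}
          \<subseteq> graded_upper_central k \<inter> homogeneous"
    using Suc by (auto simp: span_base)
  then have "graded_upper_central k \<subseteq> span (graded_upper_central k \<inter> homogeneous)"
    using Suc span_mono by (simp only: graded_upper_central.simps)
  then show ?thesis using Suc unfolding graded_subspace_def by simp
qed (auto simp: graded_subspace_def span_zero)

lemma bracket_graded_upper_central_Suc:
  assumes "z \<in> graded_upper_central (Suc k)"
  shows "br w z \<in> graded_upper_central k"
proof (rule bilinear_span_in_subspace[OF bil subspace_graded_upper_central])
  show "w \<in> span UNIV" by (simp add: span_base)
  show "z \<in> span {m \<in> homogeneous. \<forall>w. br w m \<in> graded_upper_central k}"
    using assms by simp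
qed auto

lemma graded_upper_central_mono: "graded_upper_central k \<subseteq> graded_upper_central (Suc k)"
proof (induction k)
  case 0
  then show ?case by (simp add: span_zero)
next
  case (Suc k)
  then have "{m \<in> homogeneous. \<forall>w. br w m \<in> graded_upper_central k}
               \<subseteq> {m \<in> homogeneous. \<forall>w. br w m \<in> graded_upper_central (Suc k)}"
    by auto
  then show ?case by (simp only: graded_upper_central.simps) (rule span_mono)
qed

lemma ad_invariant_graded_upper_central: "ad_invariant K (graded_upper_central k)"
  unfolding ad_invariant_def
proof (intro ballI)
  fix w u assume u: "u \<in> graded_upper_central k"
  show "br w u \<in> graded_upper_central k"
  proof (cases k)
    case (Suc k')
    then show ?thesis
      using u bracket_graded_upper_central_Suc[of u k' w] graded_upper_central_mono[of k'] by auto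
  qed (use u in \<open>simp add: bilinear_rzero[OF bil]\<close>)
qed

lemma graded_upper_central_grows:
  assumes "graded_upper_central k \<noteq> UNIV"
  shows "graded_upper_central k \<subset> graded_upper_central (Suc k)"
proof -
  have "graded_subspace UNIV" using span_V unfolding graded_subspace_def homogeneous_def by simp
  moreover have "ad_invariant UNIV UNIV" unfolding ad_invariant_def by simp
  ultimately have "\<exists>m \<in> UNIV \<inter> homogeneous. m \<notin> graded_upper_central k
                     \<and> (\<forall>w\<in>UNIV. br w m \<in> graded_upper_central k)"
    using assms by (intro graded_engel graded_subspace_graded_upper_central
        ad_invariant_graded_upper_central) auto
  then obtain m where "m \<in> homogeneous" "m \<notin> graded_upper_central k"
      "\<forall>w. br w m \<in> graded_upper_central k"
    by blast
  then have "m \<in> graded_upper_central (Suc k)" by (auto intro: span_base)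
  then show ?thesis
    using \<open>m \<notin> graded_upper_central k\<close> graded_upper_central_mono by blast
qed

lemma graded_upper_central_dim: "graded_upper_central k = UNIV \<or> k \<le> dim (graded_upper_central k)"
proof (induction k)
  case (Suc k)
  show ?case
  proof (cases "graded_upper_central (Suc k) = UNIV")
    case False
    then have "graded_upper_central k \<noteq> UNIV" using graded_upper_central_mono[of k] by blast
    then have "k \<le> dim (graded_upper_central k)" using Suc by simp
    moreover have "dim (graded_upper_central k) < dim (graded_upper_central (Suc k))"
    proof (rule dim_psubset)
      have "span (graded_upper_central j) = graded_upper_central j" for j
        by (simp only: span_eq_iff subspace_graded_upper_central)
      then show "span (graded_upper_central k) \<subset> span (graded_upper_central (Suc k))"
        using graded_upper_central_grows[OF \<open>graded_upper_central k \<noteq> UNIV\<close>] by (simp only:)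
    qed
    ultimately show ?thesis by simp
  qed simp
qed simp

lemma graded_upper_central_eq_UNIV: "graded_upper_central (DIM('v) + 1) = UNIV"
  using graded_upper_central_dim[of "DIM('v) + 1"]
    dim_subset_UNIV[of "graded_upper_central (DIM('v) + 1)"] by linarith

lemma lower_central_subset_graded_upper_central:
  "j \<le> n \<Longrightarrow> graded_upper_central n = UNIV
    \<Longrightarrow> lower_central br j \<subseteq> graded_upper_central (n - j)"
proof (induction j)
  case (Suc j)
  then have "lower_central br j \<subseteq> graded_upper_central (Suc (n - Suc j))"
    by (simp add: Suc_diff_Suc)
  then have "{br x y |x y. y \<in> lower_central br j} \<subseteq> graded_upper_central (n - Suc j)"
    using bracket_graded_upper_central_Suc by blast
  then show ?case by (simp only: lower_central.simps) (rule span_minimal[OF _ subspace_graded_upper_central])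
qed simp

theorem nilpotent: "nilpotent_lie br"
  using lower_central_subset_graded_upper_central[OF order.refl graded_upper_central_eq_UNIV]
  by (intro lower_central_subset_0_imp_nilpotent[of br "DIM('v) + 1"]) simp

end

section \<open>Complexification\<close>

text \<open>The complexification of a real vector space \<open>'a\<close> is modelled on \<open>'a \<times> 'a\<close>, the pair \<open>(x, y)\<close>
  standing for \<open>x + i y\<close>; complex scalars act through \<open>complex_scale\<close>.\<close>

definition complex_scale :: "complex \<Rightarrow> 'a::real_vector \<times> 'a \<Rightarrow> 'a \<times> 'a" where
  "complex_scale c u = (Re c *\<^sub>R fst u - Im c *\<^sub>R snd u, Re c *\<^sub>R snd u + Im c *\<^sub>R fst u)"

definition complexified_bracket ::
    "('a::real_vector \<Rightarrow> 'a \<Rightarrow> 'a) \<Rightarrow> 'a \<times> 'a \<Rightarrow> 'a \<times> 'a \<Rightarrow> 'a \<times> 'a" where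
  "complexified_bracket br u v =
     (br (fst u) (fst v) - br (snd u) (snd v), br (fst u) (snd v) + br (snd u) (fst v))"

lemma linear_complex_scale: "linear (complex_scale c)"
  by (auto intro!: linearI simp: complex_scale_def prod_eq_iff algebra_simps)

lemma complex_scale_add: "complex_scale (a + b) u = complex_scale a u + complex_scale b u"
  by (simp add: complex_scale_def prod_eq_iff algebra_simps)

lemma complex_scale_diff: "complex_scale (a - b) u = complex_scale a u - complex_scale b u"
  by (simp add: complex_scale_def prod_eq_iff algebra_simps)

lemma complex_scale_minus: "complex_scale (- a) u = - complex_scale a u"
  by (simp add: complex_scale_def prod_eq_iff algebra_simps)

lemma complex_scale_mult: "complex_scale (a * b) u = complex_scale a (complex_scale b u)"
  by (simp add: complex_scale_def prod_eq_iff algebra_simps)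

lemma complex_scale_commute: "complex_scale a (complex_scale b u) = complex_scale b (complex_scale a u)"
  by (metis complex_scale_mult mult.commute)

lemma complex_scale_0 [simp]: "complex_scale 0 u = 0"
  by (simp add: complex_scale_def zero_prod_def)

lemma complex_scale_1 [simp]: "complex_scale 1 u = u"
  by (simp add: complex_scale_def)

lemma complex_scale_of_real: "complex_scale (of_real r) u = r *\<^sub>R u"
  by (simp add: complex_scale_def prod_eq_iff)

lemma complex_scale_zero_right [simp]: "complex_scale c 0 = 0"
  by (rule linear_0[OF linear_complex_scale])

lemma complex_scale_eq_0_iff: "complex_scale c u = 0 \<longleftrightarrow> c = 0 \<or> u = 0"
  by (metis complex_scale_0 complex_scale_1 complex_scale_mult complex_scale_zero_right left_inverse)

lemma linear_map_prod_same:
  assumes "linear D"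
  shows "linear (map_prod D D)"
  by (auto intro!: linearI simp: prod_eq_iff linear_add[OF assms] linear_scale[OF assms])

lemma map_prod_complex_scale:
  assumes "linear D"
  shows "map_prod D D (complex_scale c u) = complex_scale c (map_prod D D u)"
  by (simp add: complex_scale_def prod_eq_iff linear_diff[OF assms] linear_add[OF assms]
      linear_scale[OF assms])

lemma lie_algebra_complexified_bracket:
  assumes lie: "lie_algebra br"
  shows "lie_algebra (complexified_bracket br)"
proof -
  have bil: "bilinear br" using lie unfolding lie_algebra_def by blast
  note simps = bilinear_ladd[OF bil] bilinear_radd[OF bil] bilinear_lmul[OF bil]
    bilinear_rmul[OF bil] bilinear_lsub[OF bil] bilinear_rsub[OF bil]
  show ?thesis
  proof (rule lie_algebraI_leibniz)
    show "bilinear (complexified_bracket br)"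
      unfolding bilinear_def
      by (auto intro!: linearI simp: complexified_bracket_def simps prod_eq_iff algebra_simps
          scaleR_add_right)
    show "complexified_bracket br x x = 0" for x
      using lie_algebra_antisym[OF lie, of "snd x" "fst x"] lie
      by (simp add: complexified_bracket_def prod_eq_iff lie_algebra_def)
    show "complexified_bracket br a (complexified_bracket br b c)
        = complexified_bracket br (complexified_bracket br a b) c
          + complexified_bracket br b (complexified_bracket br a c)" for a b c
      by (simp add: complexified_bracket_def simps prod_eq_iff algebra_simps
          lie_algebra_leibniz[OF lie, of "fst a"] lie_algebra_leibniz[OF lie, of "snd a"])
  qed
qed

lemma lower_central_complexified_bracket:
  assumes bil: "bilinear br" and x: "x \<in> lower_central br k"
  shows "(x, 0) \<in> lower_central (complexified_bracket br) k"
  using x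
proof (induction k arbitrary: x)
  case (Suc k)
  let ?L = "lower_central (complexified_bracket br) (Suc k)"
  have sL: "subspace ?L" by simp
  have "subspace {x. (x, 0) \<in> ?L}"
    unfolding subspace_def
  proof (intro conjI ballI allI)
    show "0 \<in> {x. (x, 0) \<in> ?L}" using subspace_0[OF sL] by (simp add: zero_prod_def)
  next
    fix x y assume "x \<in> {x. (x, 0) \<in> ?L}" "y \<in> {x. (x, 0) \<in> ?L}"
    then show "x + y \<in> {x. (x, 0) \<in> ?L}" using subspace_add[OF sL, of "(x, 0)" "(y, 0)"] by simp
  next
    fix r :: real and x assume "x \<in> {x. (x, 0) \<in> ?L}"
    then show "r *\<^sub>R x \<in> {x. (x, 0) \<in> ?L}" using subspace_scale[OF sL, of "(x, 0)" r] by simp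
  qed
  moreover have "{br a b |a b. b \<in> lower_central br k} \<subseteq> {x. (x, 0) \<in> ?L}"
  proof safe
    fix a b assume "b \<in> lower_central br k"
    then have "(b, 0) \<in> lower_central (complexified_bracket br) k" by (rule Suc.IH)
    then have "complexified_bracket br (a, 0) (b, 0) \<in> ?L"
      unfolding lower_central.simps by (intro span_base) blast
    then show "(br a b, 0) \<in> ?L"
      by (simp add: complexified_bracket_def bilinear_lzero[OF bil] bilinear_rzero[OF bil])
  qed
  ultimately show ?case using Suc.prems span_minimal by (simp only: lower_central.simps) blast
qed simp

lemma nilpotent_lie_complexified_bracket_imp:
  assumes bil: "bilinear br" and "nilpotent_lie (complexified_bracket br)"
  shows "nilpotent_lie br"
proof -
  obtain k where "lower_central (complexified_bracket br) k = {0}"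
    using assms(2) unfolding nilpotent_lie_def by blast
  then have "lower_central br k \<subseteq> {0}"
    using lower_central_complexified_bracket[OF bil] by (fastforce simp: zero_prod_def)
  then show ?thesis by (rule lower_central_subset_0_imp_nilpotent)
qed

section \<open>Generalized eigenspaces of a complexified endomorphism\<close>

locale complexified_endomorphism =
  fixes D :: "'a::euclidean_space \<Rightarrow> 'a"
  assumes linear_D: "linear D"
begin

abbreviation Dc :: "'a \<times> 'a \<Rightarrow> 'a \<times> 'a" where
  "Dc \<equiv> map_prod D D"

lemma linear_Dc: "linear Dc"
  by (rule linear_map_prod_same[OF linear_D])

lemma Dc_0 [simp]: "Dc 0 = 0"
  by (rule linear_0[OF linear_Dc])

definition D_minus :: "complex \<Rightarrow> 'a \<times> 'a \<Rightarrow> 'a \<times> 'a" where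
  "D_minus c u = Dc u - complex_scale c u"

definition gen_eigenspace :: "complex \<Rightarrow> ('a \<times> 'a) set" where
  "gen_eigenspace c = gen_kernel (D_minus c)"

lemma linear_D_minus: "linear (D_minus c)"
  unfolding D_minus_def using linear_compose_sub[OF linear_Dc linear_complex_scale] by simp

lemma subspace_gen_eigenspace: "subspace (gen_eigenspace c)"
  unfolding gen_eigenspace_def by (rule subspace_gen_kernel[OF linear_D_minus])

lemma D_minus_complex_scale: "D_minus c (complex_scale a u) = complex_scale a (D_minus c u)"
  by (simp add: D_minus_def map_prod_complex_scale[OF linear_D] linear_diff[OF linear_complex_scale]
      complex_scale_commute)

lemma D_minus_commute: "D_minus a (D_minus b u) = D_minus b (D_minus a u)"
  by (simp add: D_minus_def linear_diff[OF linear_Dc] linear_diff[OF linear_complex_scale]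
      map_prod_complex_scale[OF linear_D] complex_scale_commute algebra_simps)

lemma D_minus_shift: "D_minus c u = D_minus b u + complex_scale (b - c) u"
  by (simp add: D_minus_def complex_scale_diff)

lemma D_minus_gen_eigenspace: "u \<in> gen_eigenspace b \<Longrightarrow> D_minus c u \<in> gen_eigenspace b"
proof -
  assume "u \<in> gen_eigenspace b"
  then obtain n where n: "(D_minus b ^^ n) u = 0" unfolding gen_eigenspace_def gen_kernel_def by auto
  have "(D_minus b ^^ n) (D_minus c u) = D_minus c ((D_minus b ^^ n) u)"
    by (induction n) (simp_all add: D_minus_commute)
  then have "(D_minus b ^^ n) (D_minus c u) = 0" using n linear_0[OF linear_D_minus] by simp
  then show ?thesis unfolding gen_eigenspace_def gen_kernel_def by blast
qed

text \<open>On \<open>gen_eigenspace b\<close> the map \<open>D_minus c\<close> is \<open>D_minus b\<close>, which is nilpotent there, plus the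
  invertible scalar \<open>b - c\<close>.\<close>
lemma D_minus_gen_eigenspace_eq_0:
  assumes "b \<noteq> c" "u \<in> gen_eigenspace b" "D_minus c u = 0"
  shows "u = 0"
proof -
  have Db: "D_minus b u = complex_scale (c - b) u"
    using D_minus_shift[of c u b] assms(3) by (simp add: complex_scale_diff algebra_simps)
  have "(D_minus b ^^ n) u = complex_scale ((c - b) ^ n) u" for n
    by (induction n) (simp_all add: D_minus_complex_scale Db complex_scale_mult[symmetric] mult.commute)
  moreover obtain n where "(D_minus b ^^ n) u = 0"
    using assms(2) unfolding gen_eigenspace_def gen_kernel_def by auto
  ultimately show ?thesis using assms(1) by (simp add: complex_scale_eq_0_iff)
qed

lemma D_minus_gen_eigenspace_surj:
  assumes "b \<noteq> c" "x \<in> gen_eigenspace b"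
  shows "\<exists>y\<in>gen_eigenspace b. D_minus c y = x"
proof -
  have inj: "inj_on (D_minus c) (span (gen_eigenspace b))"
  proof (rule inj_onI)
    fix y z assume yz: "y \<in> span (gen_eigenspace b)" "z \<in> span (gen_eigenspace b)"
      "D_minus c y = D_minus c z"
    have "y - z \<in> gen_eigenspace b"
      using yz(1,2) subspace_gen_eigenspace by (simp add: span_eq_iff[THEN iffD2] subspace_diff)
    moreover have "D_minus c (y - z) = 0" using yz(3) by (simp add: linear_diff[OF linear_D_minus])
    ultimately show "y = z" using D_minus_gen_eigenspace_eq_0[OF assms(1)] by fastforce
  qed
  have "D_minus c ` gen_eigenspace b = gen_eigenspace b"
  proof (rule subspace_dim_equal)
    show "D_minus c ` gen_eigenspace b \<subseteq> gen_eigenspace b"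
      using D_minus_gen_eigenspace by blast
    show "dim (gen_eigenspace b) \<le> dim (D_minus c ` gen_eigenspace b)"
      using dim_image_eq[OF linear_D_minus inj] by simp
  qed (simp_all add: linear_subspace_image[OF linear_D_minus] subspace_gen_eigenspace)
  then have "x \<in> D_minus c ` gen_eigenspace b" using assms(2) by simp
  then show ?thesis by blast
qed

lemma D_minus_preimage_span_gen_eigenspaces:
  assumes "D_minus c w \<in> span (\<Union>b. gen_eigenspace b)"
  shows "w \<in> span (\<Union>b. gen_eigenspace b)"
proof -
  let ?S = "span (\<Union>b. gen_eigenspace b)"
  define Q where "Q = {x + y |x y. x \<in> D_minus c ` ?S \<and> y \<in> gen_eigenspace c}"
  have "subspace Q"
    unfolding Q_def by (intro subspace_sums linear_subspace_image[OF linear_D_minus]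
        subspace_span subspace_gen_eigenspace)
  moreover have "gen_eigenspace b \<subseteq> Q" for b
  proof
    fix u assume u: "u \<in> gen_eigenspace b"
    show "u \<in> Q"
    proof (cases "b = c")
      case True
      have "D_minus c 0 + u \<in> Q"
        unfolding Q_def using u True span_zero by blast
      then show ?thesis by (simp add: linear_0[OF linear_D_minus])
    next
      case False
      then obtain y where "y \<in> gen_eigenspace b" "D_minus c y = u"
        using D_minus_gen_eigenspace_surj u by blast
      then have "u + 0 \<in> Q"
        unfolding Q_def using subspace_0[OF subspace_gen_eigenspace] by (blast intro: span_base)
      then show ?thesis by simp
    qed
  qed
  ultimately have "?S \<subseteq> Q" by (intro span_minimal) auto
  then obtain y v where y: "y \<in> ?S" "v \<in> gen_eigenspace c" "D_minus c w = D_minus c y + v"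
    using assms unfolding Q_def by blast
  then have "D_minus c (w - y) \<in> gen_eigenspace c" by (simp add: linear_diff[OF linear_D_minus])
  then obtain n where "(D_minus c ^^ n) (D_minus c (w - y)) = 0"
    unfolding gen_eigenspace_def gen_kernel_def by auto
  then have "(D_minus c ^^ Suc n) (w - y) = 0" by (simp add: funpow_Suc_right del: funpow.simps)
  then have "w - y \<in> ?S" unfolding gen_eigenspace_def gen_kernel_def by (blast intro: span_base)
  then show ?thesis using span_add[OF _ y(1)] by fastforce
qed

definition poly_Dc :: "complex poly \<Rightarrow> 'a \<times> 'a \<Rightarrow> 'a \<times> 'a" where
  "poly_Dc p = fold_coeffs (\<lambda>a f w. complex_scale a w + Dc (f w)) p (\<lambda>w. 0)"

lemma poly_Dc_0 [simp]: "poly_Dc 0 w = 0"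
  by (simp add: poly_Dc_def)

lemma poly_Dc_pCons: "poly_Dc (pCons a p) w = complex_scale a w + Dc (poly_Dc p w)"
  by (cases "p = 0 \<and> a = 0") (auto simp: poly_Dc_def)

lemma linear_poly_Dc: "linear (poly_Dc p)"
proof (induction p)
  case 0
  have "poly_Dc 0 = (\<lambda>w. 0)" by auto
  then show ?case by (simp add: linear_zero)
next
  case (pCons a p)
  have "poly_Dc (pCons a p) = (\<lambda>w. complex_scale a w + (Dc \<circ> poly_Dc p) w)"
    by (auto simp: poly_Dc_pCons)
  then show ?case
    using linear_compose_add[OF linear_complex_scale linear_compose[OF pCons.IH linear_Dc]] by simp
qed

lemma poly_Dc_add: "poly_Dc (p + q) w = poly_Dc p w + poly_Dc q w"
proof (induction p q rule: poly_induct2)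
  case (pCons a p b q)
  then show ?case
    by (simp add: poly_Dc_pCons complex_scale_add linear_add[OF linear_Dc] algebra_simps)
qed simp

lemma poly_Dc_diff: "poly_Dc (p - q) w = poly_Dc p w - poly_Dc q w"
  by (metis poly_Dc_add diff_add_cancel add_diff_cancel_right')

lemma poly_Dc_smult: "poly_Dc (smult a p) w = complex_scale a (poly_Dc p w)"
  by (induction p) (simp_all add: poly_Dc_pCons complex_scale_mult
      map_prod_complex_scale[OF linear_D] linear_add[OF linear_complex_scale])

lemma poly_Dc_mult: "poly_Dc (p * q) w = poly_Dc p (poly_Dc q w)"
  by (induction p) (simp_all add: poly_Dc_pCons poly_Dc_add poly_Dc_smult)

lemma poly_Dc_sum: "poly_Dc (sum g A) w = (\<Sum>x\<in>A. poly_Dc (g x) w)"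
  by (induction A rule: infinite_finite_induct) (simp_all add: poly_Dc_add)

lemma poly_Dc_monom: "poly_Dc (monom 1 i) w = (Dc ^^ i) w"
  by (induction i) (simp_all add: monom_0 monom_Suc poly_Dc_pCons)

lemma poly_Dc_const: "poly_Dc [:a:] w = complex_scale a w"
  by (simp add: poly_Dc_pCons)

lemma poly_Dc_linear_factor: "poly_Dc [:- c, 1:] w = D_minus c w"
  by (simp add: poly_Dc_pCons D_minus_def complex_scale_minus)

lemma poly_Dc_eigenvector:
  assumes "D_minus c y = 0"
  shows "poly_Dc p y = complex_scale (poly p c) y"
proof (induction p)
  case (pCons a p)
  have "Dc y = complex_scale c y" using assms by (simp add: D_minus_def)
  then show ?case using pCons.IH
    by (simp add: poly_Dc_pCons map_prod_complex_scale[OF linear_D] complex_scale_add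
        complex_scale_mult[symmetric] mult.commute)
qed simp

lemma poly_Dc_annihilates_vector: "\<exists>q. q \<noteq> 0 \<and> poly_Dc q w = 0"
proof -
  define N where "N = DIM('a \<times> 'a)"
  define v where "v i = (Dc ^^ i) w" for i
  show ?thesis
  proof (cases "inj_on v {0..N}")
    case False
    then obtain i j where "i \<noteq> j" "v i = v j" unfolding inj_on_def by blast
    moreover have "coeff (monom (1::complex) i - monom 1 j) i = 1" using \<open>i \<noteq> j\<close> by simp
    then have "monom (1::complex) i - monom 1 j \<noteq> 0" by force
    ultimately show ?thesis
      by (intro exI[of _ "monom 1 i - monom 1 j"]) (simp add: poly_Dc_diff poly_Dc_monom v_def)
  next
    case True
    then have "card (v ` {0..N}) = N + 1" by (simp add: card_image)
    then have "dependent (v ` {0..N})"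
      using independent_bound[of "v ` {0..N}"] unfolding N_def by linarith
    then obtain u where u: "\<exists>x\<in>v ` {0..N}. u x \<noteq> 0" "(\<Sum>x\<in>v ` {0..N}. u x *\<^sub>R x) = 0"
      using dependent_finite[of "v ` {0..N}"] by auto
    then obtain k where k: "k \<in> {0..N}" "u (v k) \<noteq> 0" by blast
    define q where "q = (\<Sum>i\<in>{0..N}. smult (of_real (u (v i))) (monom (1::complex) i))"
    have "poly_Dc q w = (\<Sum>i\<in>{0..N}. u (v i) *\<^sub>R v i)"
      by (simp add: q_def poly_Dc_sum poly_Dc_smult complex_scale_of_real poly_Dc_monom v_def)
    also have "\<dots> = 0" using u(2) by (simp add: sum.reindex[OF True])
    finally have "poly_Dc q w = 0" .
    moreover have "coeff q k = (\<Sum>i\<in>{0..N}. if i = k then of_real (u (v i)) else 0)"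
      unfolding q_def coeff_sum by (rule sum.cong) auto
    then have "coeff q k = of_real (u (v k))" using k(1) by simp
    ultimately show ?thesis using k(2) by (intro exI[of _ q]) auto
  qed
qed

lemma poly_Dc_annihilator: "\<exists>p. p \<noteq> 0 \<and> (\<forall>w. poly_Dc p w = 0)"
proof -
  obtain q where q: "\<And>b. q b \<noteq> 0 \<and> poly_Dc (q b) b = 0"
    using poly_Dc_annihilates_vector by metis
  define p where "p = (\<Prod>b\<in>(Basis :: ('a \<times> 'a) set). q b)"
  have "poly_Dc p b = 0" if "b \<in> Basis" for b
  proof -
    have "p = (\<Prod>b'\<in>Basis - {b}. q b') * q b"
      unfolding p_def using that by (simp add: prod.remove mult.commute)
    then show ?thesis using q by (simp add: poly_Dc_mult linear_0[OF linear_poly_Dc])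
  qed
  moreover have "subspace {w. poly_Dc p w = 0}"
    using linear_poly_Dc[of p] unfolding subspace_def by (simp add: linear_add linear_scale linear_0)
  ultimately have "span Basis \<subseteq> {w. poly_Dc p w = 0}" by (intro span_minimal) auto
  moreover have "p \<noteq> 0" unfolding p_def using q by (simp add: prod_zero_iff)
  ultimately show ?thesis by auto
qed

text \<open>Peel off linear factors of \<open>q\<close> (fundamental theorem of algebra) one at a time.\<close>
lemma poly_Dc_kernel_subset_span:
  assumes "q \<noteq> 0" "poly_Dc q w = 0"
  shows "w \<in> span (\<Union>c. gen_eigenspace c)"
  using assms
proof (induction "degree q" arbitrary: q w rule: less_induct)
  case less
  show ?case
  proof (cases "degree q = 0")
    case True
    then obtain a where "q = [:a:]" using degree_0_id by metis
    then have "w = 0" using less.prems by (simp add: poly_Dc_const complex_scale_eq_0_iff)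
    then show ?thesis by (simp add: span_zero)
  next
    case False
    then have "\<not> constant (poly q)" by (simp add: constant_degree)
    then obtain c where "poly q c = 0" using fundamental_theorem_of_algebra by blast
    then obtain r where r: "q = [:-c, 1:] * r" using poly_eq_0_iff_dvd by (metis dvdE)
    then have "r \<noteq> 0" using less.prems(1) by auto
    then have "degree q = degree [:-c, 1:] + degree r"
      unfolding r by (intro degree_mult_eq) auto
    then have "degree r < degree q" by simp
    moreover have "q = r * [:-c, 1:]" using r by (simp only: mult.commute)
    then have "poly_Dc q w = poly_Dc r (poly_Dc [:-c, 1:] w)" by (simp only: poly_Dc_mult)
    then have "poly_Dc r (D_minus c w) = 0" using less.prems(2) by (simp only: poly_Dc_linear_factor)
    ultimately have "D_minus c w \<in> span (\<Union>c. gen_eigenspace c)"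
      using less.hyps \<open>r \<noteq> 0\<close> by blast
    then show ?thesis by (rule D_minus_preimage_span_gen_eigenspaces)
  qed
qed

theorem span_gen_eigenspaces: "span (\<Union>c. gen_eigenspace c) = UNIV"
  using poly_Dc_annihilator poly_Dc_kernel_subset_span by blast

text \<open>Every generalized eigenvalue is a root of the annihilating polynomial.\<close>
theorem finite_gen_eigenvalues: "finite {c. gen_eigenspace c \<noteq> {0}}"
proof -
  obtain p where p: "p \<noteq> 0" "\<And>w. poly_Dc p w = 0" using poly_Dc_annihilator by blast
  have "poly p c = 0" if "gen_eigenspace c \<noteq> {0}" for c
  proof -
    have "\<exists>x \<in> gen_eigenspace c. x \<noteq> 0"
      using that subspace_0[OF subspace_gen_eigenspace, of c] by (auto simp: set_eq_iff)
    then obtain x where "x \<in> gen_eigenspace c" "x \<noteq> 0" by blast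
    moreover from this(1) obtain n where "(D_minus c ^^ n) x = 0"
      unfolding gen_eigenspace_def gen_kernel_def by blast
    ultimately obtain y where y: "y \<noteq> 0" "D_minus c y = 0"
      using gen_kernel_nontrivial_imp_kernel_nontrivial by blast
    have "complex_scale (poly p c) y = 0"
      using poly_Dc_eigenvector[OF y(2), of p] p(2) by simp
    then show ?thesis using y(1) by (simp add: complex_scale_eq_0_iff)
  qed
  then have "{c. gen_eigenspace c \<noteq> {0}} \<subseteq> {c. poly p c = 0}" by blast
  then show ?thesis using poly_roots_finite[OF p(1)] finite_subset by blast
qed

end

section \<open>Jacobson's theorem\<close>

definition derivation :: "('a::real_vector \<Rightarrow> 'a \<Rightarrow> 'a) \<Rightarrow> ('a \<Rightarrow> 'a) \<Rightarrow> bool" where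
  "derivation br D \<longleftrightarrow> linear D \<and> (\<forall>x y. D (br x y) = br (D x) y + br x (D y))"

locale invertible_derivation = complexified_endomorphism D
  for D :: "'a::euclidean_space \<Rightarrow> 'a" +
  fixes br :: "'a \<Rightarrow> 'a \<Rightarrow> 'a"
  assumes lie: "lie_algebra br"
    and derivation_rule: "D (br x y) = br (D x) y + br x (D y)"
    and inj_D: "inj D"
begin

abbreviation cbr :: "'a \<times> 'a \<Rightarrow> 'a \<times> 'a \<Rightarrow> 'a \<times> 'a" where
  "cbr \<equiv> complexified_bracket br"

lemma bilinear_cbr: "bilinear cbr"
  using lie_algebra_complexified_bracket[OF lie] unfolding lie_algebra_def by blast

lemma D_minus_bracket: "D_minus (a + b) (cbr u v) = cbr (D_minus a u) v + cbr u (D_minus b v)"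
proof -
  have bil: "bilinear br" using lie unfolding lie_algebra_def by blast
  show ?thesis
    by (simp add: D_minus_def complexified_bracket_def complex_scale_def prod_eq_iff
        derivation_rule linear_diff[OF linear_D] linear_add[OF linear_D]
        bilinear_ladd[OF bil] bilinear_radd[OF bil] bilinear_lmul[OF bil] bilinear_rmul[OF bil]
        bilinear_lsub[OF bil] bilinear_rsub[OF bil] algebra_simps)
qed

lemma gen_eigenspace_bracket:
  assumes "u \<in> gen_eigenspace a" "v \<in> gen_eigenspace b"
  shows "cbr u v \<in> gen_eigenspace (a + b)"
proof -
  obtain p q where "(D_minus a ^^ p) u = 0" "(D_minus b ^^ q) v = 0"
    using assms unfolding gen_eigenspace_def gen_kernel_def by blast
  then have "(D_minus (a + b) ^^ (p + q)) (cbr u v) = 0"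
    by (intro leibniz_funpow_eq_0[where C = "D_minus (a + b)" and f = cbr and A = "D_minus a"
          and B = "D_minus b", OF bilinear_cbr linear_D_minus linear_D_minus linear_D_minus
          D_minus_bracket])
  then show ?thesis unfolding gen_eigenspace_def gen_kernel_def by blast
qed

lemma gen_eigenspace_0: "gen_eigenspace 0 = {0}"
proof -
  have "inj Dc" using map_prod_inj_on[OF inj_D inj_D] by simp
  then have "inj (Dc ^^ n)" for n by (simp add: inj_fn)
  then have "x = 0" if "(Dc ^^ n) x = 0" for n x
    using that linear_0[OF linear_funpow[OF linear_Dc], of n] by (metis injD)
  moreover have "D_minus 0 = Dc" by (simp add: D_minus_def fun_eq_iff)
  ultimately show ?thesis
    unfolding gen_eigenspace_def gen_kernel_def by (auto intro: exI[of _ 0])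
qed

lemma graded_lie_algebra: "graded_lie_algebra cbr gen_eigenspace"
  by unfold_locales (simp_all add: lie_algebra_complexified_bracket[OF lie]
      subspace_gen_eigenspace gen_eigenspace_bracket gen_eigenspace_0 finite_gen_eigenvalues
      span_gen_eigenspaces)

end

theorem invertible_derivation_imp_nilpotent:
  fixes br :: "'a::euclidean_space \<Rightarrow> 'a \<Rightarrow> 'a"
  assumes "lie_algebra br" "derivation br D" "inj D"
  shows "nilpotent_lie br"
proof -
  interpret invertible_derivation D br
    using assms unfolding derivation_def
    by (intro invertible_derivation.intro complexified_endomorphism.intro
        invertible_derivation_axioms.intro) auto
  have "nilpotent_lie cbr" by (rule graded_lie_algebra.nilpotent[OF graded_lie_algebra])
  then show ?thesis
    using assms(1) nilpotent_lie_complexified_bracket_imp unfolding lie_algebra_def by blast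
qed

section \<open>Quadratic Lie algebras with a symplectic form\<close>

lemma bilinear_form_representation:
  fixes F :: "'a::euclidean_space \<Rightarrow> 'a \<Rightarrow> real"
  assumes F: "bilinear F"
  shows "\<exists>M. linear M \<and> (\<forall>u v. M u \<bullet> v = F u v)"
proof (intro exI conjI allI)
  show "linear (\<lambda>u. \<Sum>b\<in>Basis. F u b *\<^sub>R b)"
    by (rule linearI)
      (simp_all add: bilinear_ladd[OF F] bilinear_lmul[OF F] scaleR_add_left sum.distrib
        scaleR_sum_right)
  fix u v :: 'a
  have lin: "linear (F u)" using F unfolding bilinear_def by blast
  have "F u v = F u (\<Sum>b\<in>Basis. (v \<bullet> b) *\<^sub>R b)" by (simp add: euclidean_representation)
  also have "\<dots> = (\<Sum>b\<in>Basis. F u b * (b \<bullet> v))"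
    by (simp add: linear_sum[OF lin] linear_scale[OF lin] inner_commute mult.commute)
  finally show "(\<Sum>b\<in>Basis. F u b *\<^sub>R b) \<bullet> v = F u v" by (simp add: inner_sum_left)
qed

text \<open>A nondegenerate form identifies \<open>'a\<close> with its dual, so every bilinear form \<open>\<theta>\<close> can be
  written as \<open>B (D u) v\<close>.\<close>
lemma bilinear_form_factor:
  fixes B \<theta> :: "'a::euclidean_space \<Rightarrow> 'a \<Rightarrow> real"
  assumes B: "bilinear B" "nondegenerate_form B" and \<theta>: "bilinear \<theta>"
  shows "\<exists>D. linear D \<and> (\<forall>u v. B (D u) v = \<theta> u v)"
proof -
  obtain M where M: "linear M" "\<And>u v. M u \<bullet> v = B u v"
    using bilinear_form_representation[OF B(1)] by blast
  obtain N where N: "linear N" "\<And>u v. N u \<bullet> v = \<theta> u v"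
    using bilinear_form_representation[OF \<theta>] by blast
  have "inj M"
  proof (rule injI)
    fix x y assume "M x = M y"
    then have "B (x - y) v = 0" for v
      using M(2)[of x v] M(2)[of y v] by (simp add: bilinear_lsub[OF B(1)])
    then have "x - y = 0" using B(2) unfolding nondegenerate_form_def by blast
    then show "x = y" by simp
  qed
  then have "surj M" by (rule linear_inj_imp_surj[OF M(1)])
  then obtain g where g: "linear g" "M \<circ> g = id"
    using linear_surjective_right_inverse[OF M(1)] by blast
  have "B (g (N u)) v = \<theta> u v" for u v
    using M(2)[of "g (N u)" v] N(2)[of u v] g(2) by (simp add: pointfree_idE)
  then show ?thesis using linear_compose[OF N(1) g(1)] by (intro exI[of _ "g \<circ> N"]) auto
qed

lemma nondegenerate_form_factor_inj:
  assumes B: "bilinear B" and D: "linear D" and \<theta>: "nondegenerate_form \<theta>"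
    and factor: "\<And>u v. B (D u) v = \<theta> u v"
  shows "inj D"
proof (rule injI)
  fix x y assume "D x = D y"
  then have "\<theta> (x - y) v = 0" for v
    using factor[of "x - y" v] by (simp add: linear_diff[OF D] bilinear_lzero[OF B])
  then have "x - y = 0" using \<theta> unfolding nondegenerate_form_def by blast
  then show "x = y" by simp
qed

text \<open>Invariance of \<open>B\<close> turns the cocycle identity of \<open>\<theta>\<close> into the Leibniz rule for \<open>D\<close>.\<close>
lemma quadratic_cocycle_factor_derivation:
  assumes quad: "quadratic_lie_algebra br B" and cocycle: "two_cocycle br \<theta>"
    and D: "linear D" and factor: "\<And>u v. B (D u) v = \<theta> u v"
  shows "derivation br D"
proof -
  have lie: "lie_algebra br" and B: "bilinear B" and sym: "\<And>u v. B u v = B v u"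
    and nondeg: "nondegenerate_form B" and inv: "\<And>u v w. B (br u v) w + B (br u w) v = 0"
    using quad unfolding quadratic_lie_algebra_def by auto
  have \<theta>: "bilinear \<theta>" "\<And>u. \<theta> u u = 0"
    and cyc: "\<And>u v w. \<theta> (br u v) w + \<theta> (br v w) u + \<theta> (br w u) v = 0"
    using cocycle unfolding two_cocycle_def by auto
  note anti\<theta> = bilinear_alternating_antisym[OF \<theta>]
  note anti = lie_algebra_antisym[OF lie]
  have "B (D (br u v)) w = B (br (D u) v) w + B (br u (D v)) w" for u v w
  proof -
    have "\<theta> (br v w) u = B (br v (D u)) w"
      using anti\<theta>[of "br v w" u] factor[of u "br v w"] sym[of "D u"] inv[of v w "D u"] by simp
    also have "\<dots> = - B (br (D u) v) w"
      using anti[of v "D u"] by (simp add: bilinear_lneg[OF B])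
    finally have 1: "\<theta> (br v w) u = - B (br (D u) v) w" .
    have "\<theta> (br w u) v = B (br u w) (D v)"
      using anti\<theta>[of "br w u" v] factor[of v "br w u"] sym[of "D v"] anti[of w u]
      by (simp add: bilinear_lneg[OF B])
    also have "\<dots> = - B (br u (D v)) w"
      using inv[of u w "D v"] by (simp add: eq_neg_iff_add_eq_0)
    finally have 2: "\<theta> (br w u) v = - B (br u (D v)) w" .
    show ?thesis using factor[of "br u v" w] cyc[of u v w] 1 2 by simp
  qed
  then have "B (D (br u v) - br (D u) v - br u (D v)) w = 0" for u v w
    by (simp add: bilinear_lsub[OF B])
  then have "D (br u v) = br (D u) v + br u (D v)" for u v
    using nondeg unfolding nondegenerate_form_def by (metis diff_diff_eq eq_iff_diff_eq_0)
  then show ?thesis using D unfolding derivation_def by blast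
qed

lemma quadratic_symplectic_invertible_derivation:
  assumes quad: "quadratic_lie_algebra br B" and sympl: "symplectic_form br \<theta>"
  obtains D where "derivation br D" "inj D"
proof -
  have B: "bilinear B" "nondegenerate_form B" using quad unfolding quadratic_lie_algebra_def by auto
  have cocycle: "two_cocycle br \<theta>" and nondeg: "nondegenerate_form \<theta>"
    using sympl unfolding symplectic_form_def by auto
  then obtain D where D: "linear D" "\<And>u v. B (D u) v = \<theta> u v"
    using bilinear_form_factor[OF B] unfolding two_cocycle_def by blast
  show thesis
    using that quadratic_cocycle_factor_derivation[OF quad cocycle D]
      nondegenerate_form_factor_inj[OF B(1) D(1) nondeg D(2)] by blast
qed

theorem mainTheorem1:
  fixes br :: "'a::euclidean_space \<Rightarrow> 'a \<Rightarrow> 'a"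
    and B :: "'a \<Rightarrow> 'a \<Rightarrow> real"
  assumes "quadratic_lie_algebra br B"
    and "\<exists>\<theta>. symplectic_form br \<theta>"
  shows "nilpotent_lie br"
proof -
  obtain \<theta> where "symplectic_form br \<theta>" using assms(2) by blast
  then obtain D where "derivation br D" "inj D"
    using quadratic_symplectic_invertible_derivation[OF assms(1)] by blast
  moreover have "lie_algebra br" using assms(1) unfolding quadratic_lie_algebra_def by blast
  ultimately show ?thesis using invertible_derivation_imp_nilpotent by blast
qed

end
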